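(* The forgetful functor $U\colon \mathbf{Lens}\to\mathbf{Cat}$ preserves and reflects monomorphisms: a lens $M$ is a monomorphism in $\mathbf{Lens}$ if and only if its get functor $UM$ is a monomorphism in $\mathbf{Cat}$.
   Context: $\mathbf{Cat}$ is the category of small categories and functors. A lens $F\colon \mathbf{A}\to\mathbf{B}$ between small categories consists of a functor $F\colon\mathbf{A}\to\mathbf{B}$ (the get functor) together with, for each object $A$ of $\mathbf{A}$, a function $\varphi_{F,A}$ from the set of morphisms of $\mathbf{B}$ with domain $FA$ to the set of morphisms of $\mathbf{A}$ with domain $A$ (the put functions), such that: $F(\varphi_{F,A}b)=b$; $\varphi_{F,A}(\mathrm{id}_{FA})=\mathrm{id}_A$; and $\varphi_{F,A}(b'\circ b)=\varphi_{F,A'}(b')\circ\varphi_{F,A}(b)$ whenever $b$ has domain $FA$, $A'$ is the codomain of $\varphi_{F,A}b$, and $b'$ has domain $FA'$. $\mathbf{Lens}$ is the category of small categories and lenses; the composite of $F\colon\mathbf{A}\to\mathbf{B}$ and $G\colon\mathbf{B}\to\mathbf{C}$ has get functor $G\circ F$ and put functions $\varphi_{G\circ F,A}(c)=\varphi_{F,A}(\varphi_{G,FA}(c))$. $U\colon\mathbf{Lens}\to\mathbf{Cat}$ is the identity-on-objects functor sending a lens to its get functor. *)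

theory Defs
  imports Main
begin

text \<open>A small category with objects drawn from type 'o and morphisms from type 'a.
  Comp g f denotes the composite g after f (defined when Cod f = Dom g).\<close>

record ('o, 'a) cat =
  Obj  :: "'o set"
  Arr  :: "'a set"
  Dom  :: "'a \<Rightarrow> 'o"
  Cod  :: "'a \<Rightarrow> 'o"
  Id   :: "'o \<Rightarrow> 'a"
  Comp :: "'a \<Rightarrow> 'a \<Rightarrow> 'a"

definition is_cat :: "('o, 'a) cat \<Rightarrow> bool" where
  "is_cat C \<longleftrightarrow>
     (\<forall>f\<in>Arr C. Dom C f \<in> Obj C \<and> Cod C f \<in> Obj C) \<and>
     (\<forall>x\<in>Obj C. Id C x \<in> Arr C \<and> Dom C (Id C x) = x \<and> Cod C (Id C x) = x) \<and>
     (\<forall>f\<in>Arr C. \<forall>g\<in>Arr C. Cod C f = Dom C g \<longrightarrow>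
        Comp C g f \<in> Arr C \<and> Dom C (Comp C g f) = Dom C f \<and> Cod C (Comp C g f) = Cod C g) \<and>
     (\<forall>f\<in>Arr C. Comp C f (Id C (Dom C f)) = f \<and> Comp C (Id C (Cod C f)) f = f) \<and>
     (\<forall>f\<in>Arr C. \<forall>g\<in>Arr C. \<forall>h\<in>Arr C. Cod C f = Dom C g \<longrightarrow> Cod C g = Dom C h \<longrightarrow>
        Comp C h (Comp C g f) = Comp C (Comp C h g) f)"

record ('o, 'a, 'p, 'b) ftor =
  fobj :: "'o \<Rightarrow> 'p"
  farr :: "'a \<Rightarrow> 'b"

definition is_functor :: "('o, 'a) cat \<Rightarrow> ('p, 'b) cat \<Rightarrow> ('o, 'a, 'p, 'b) ftor \<Rightarrow> bool" where
  "is_functor C D F \<longleftrightarrow>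
     (\<forall>x\<in>Obj C. fobj F x \<in> Obj D) \<and>
     (\<forall>f\<in>Arr C. farr F f \<in> Arr D \<and> Dom D (farr F f) = fobj F (Dom C f)
                                   \<and> Cod D (farr F f) = fobj F (Cod C f)) \<and>
     (\<forall>x\<in>Obj C. farr F (Id C x) = Id D (fobj F x)) \<and>
     (\<forall>f\<in>Arr C. \<forall>g\<in>Arr C. Cod C f = Dom C g \<longrightarrow>
        farr F (Comp C g f) = Comp D (farr F g) (farr F f))"

text \<open>Functors are identified when they agree on the objects and morphisms of their domain.\<close>
definition ftor_eq :: "('o, 'a) cat \<Rightarrow> ('o, 'a, 'p, 'b) ftor \<Rightarrow> ('o, 'a, 'p, 'b) ftor \<Rightarrow> bool" where
  "ftor_eq C F G \<longleftrightarrow> (\<forall>x\<in>Obj C. fobj F x = fobj G x) \<and> (\<forall>f\<in>Arr C. farr F f = farr G f)"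

definition ftor_comp :: "('p, 'b, 'q, 'c) ftor \<Rightarrow> ('o, 'a, 'p, 'b) ftor \<Rightarrow> ('o, 'a, 'q, 'c) ftor" where
  "ftor_comp G F = \<lparr>fobj = fobj G \<circ> fobj F, farr = farr G \<circ> farr F\<rparr>"

text \<open>A lens: a get functor together with put functions; lput L x b is the lift of the
  morphism b (with domain F x) to a morphism with domain x.\<close>

record ('o, 'a, 'p, 'b) lens =
  lget :: "('o, 'a, 'p, 'b) ftor"
  lput :: "'o \<Rightarrow> 'b \<Rightarrow> 'a"

definition is_lens :: "('o, 'a) cat \<Rightarrow> ('p, 'b) cat \<Rightarrow> ('o, 'a, 'p, 'b) lens \<Rightarrow> bool" where
  "is_lens A B L \<longleftrightarrow>
     is_functor A B (lget L) \<and>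
     (\<forall>x\<in>Obj A. \<forall>b\<in>Arr B. Dom B b = fobj (lget L) x \<longrightarrow>
        lput L x b \<in> Arr A \<and> Dom A (lput L x b) = x \<and> farr (lget L) (lput L x b) = b) \<and>
     (\<forall>x\<in>Obj A. lput L x (Id B (fobj (lget L) x)) = Id A x) \<and>
     (\<forall>x\<in>Obj A. \<forall>b\<in>Arr B. \<forall>b'\<in>Arr B.
        Dom B b = fobj (lget L) x \<longrightarrow> Cod B b = Dom B b' \<longrightarrow>
        lput L x (Comp B b' b) = Comp A (lput L (Cod A (lput L x b)) b') (lput L x b))"

definition lens_eq :: "('o, 'a) cat \<Rightarrow> ('p, 'b) cat \<Rightarrow> ('o, 'a, 'p, 'b) lens \<Rightarrow> ('o, 'a, 'p, 'b) lens \<Rightarrow> bool" where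
  "lens_eq A B L L' \<longleftrightarrow> ftor_eq A (lget L) (lget L') \<and>
     (\<forall>x\<in>Obj A. \<forall>b\<in>Arr B. Dom B b = fobj (lget L) x \<longrightarrow> lput L x b = lput L' x b)"

definition lens_comp :: "('p, 'b, 'q, 'c) lens \<Rightarrow> ('o, 'a, 'p, 'b) lens \<Rightarrow> ('o, 'a, 'q, 'c) lens" where
  "lens_comp G F = \<lparr>lget = ftor_comp (lget G) (lget F),
                    lput = (\<lambda>x c. lput F x (lput G (fobj (lget F) x) c))\<rparr>"

section \<open>Monomorphisms, tested against small categories in a universe of types 'x, 'y\<close>

definition mono_Cat :: "('o, 'a) cat \<Rightarrow> ('p, 'b) cat \<Rightarrow> ('o, 'a, 'p, 'b) ftor
                         \<Rightarrow> 'x itself \<Rightarrow> 'y itself \<Rightarrow> bool" where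
  "mono_Cat A B M _ _ \<longleftrightarrow>
     (\<forall>(X :: ('x, 'y) cat) F G. is_cat X \<and> is_functor X A F \<and> is_functor X A G \<and>
        ftor_eq X (ftor_comp M F) (ftor_comp M G) \<longrightarrow> ftor_eq X F G)"

definition mono_Lens :: "('o, 'a) cat \<Rightarrow> ('p, 'b) cat \<Rightarrow> ('o, 'a, 'p, 'b) lens
                         \<Rightarrow> 'x itself \<Rightarrow> 'y itself \<Rightarrow> bool" where
  "mono_Lens A B M _ _ \<longleftrightarrow>
     (\<forall>(X :: ('x, 'y) cat) F G. is_cat X \<and> is_lens X A F \<and> is_lens X A G \<and>
        lens_eq X B (lens_comp M F) (lens_comp M G) \<longrightarrow> lens_eq X A F G)"

end

theory Submission
  imports Defs
begin

text \<open>Both kinds of monicity mean that the get functor is injective on objects and morphisms.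
  Injectivity suffices in Lens because the put functions of such a lens are forced:
  put x (get f) = f. Conversely, the kernel pair of the get functor (pairs with equal images)
  carries two projection lenses, whose puts fill in the other component by lifting the image along
  M. Their composites with M agree, so monicity in either category makes the projections equal,
  which is injectivity. The kernel pair is transported along the given injections into the
  universe 'x, 'y of test categories.\<close>

definition injective_functor :: "('o, 'a) cat \<Rightarrow> ('o, 'a, 'p, 'b) ftor \<Rightarrow> bool" where
  "injective_functor A F \<longleftrightarrow> inj_on (fobj F) (Obj A) \<and> inj_on (farr F) (Arr A)"

lemma is_lens_functor: "is_lens A B L \<Longrightarrow> is_functor A B (lget L)"
  unfolding is_lens_def by blast

lemma lget_lens_comp [simp]: "lget (lens_comp G F) = ftor_comp (lget G) (lget F)"
  unfolding lens_comp_def by simp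

lemma ftor_eq_lens_comp:
  "lens_eq X B (lens_comp M F) (lens_comp M G) \<Longrightarrow>
     ftor_eq X (ftor_comp (lget M) (lget F)) (ftor_comp (lget M) (lget G))"
  unfolding lens_eq_def by simp

lemma mono_Cat_if_injective:
  assumes "injective_functor A M"
  shows "mono_Cat A B M TYPE('x) TYPE('y)"
  unfolding mono_Cat_def
proof (intro allI impI, elim conjE)
  fix X :: "('x, 'y) cat" and F G
  assume "is_functor X A F" "is_functor X A G" "ftor_eq X (ftor_comp M F) (ftor_comp M G)"
  with assms show "ftor_eq X F G"
    unfolding ftor_eq_def is_functor_def ftor_comp_def injective_functor_def inj_on_def by auto
qed

lemma lput_farr_if_injective:
  assumes M: "is_lens A B M" and inj: "injective_functor A (lget M)"
    and "x \<in> Obj A" "f \<in> Arr A" "Dom A f = x"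
  shows "lput M x (farr (lget M) f) = f"
proof -
  let ?g = "lput M x (farr (lget M) f)"
  have "farr (lget M) f \<in> Arr B" "Dom B (farr (lget M) f) = fobj (lget M) x"
    using is_lens_functor[OF M] assms(3-5) unfolding is_functor_def by auto
  then have "?g \<in> Arr A" "farr (lget M) ?g = farr (lget M) f"
    using M \<open>x \<in> Obj A\<close> unfolding is_lens_def by auto
  then show ?thesis
    using inj \<open>f \<in> Arr A\<close> unfolding injective_functor_def inj_on_def by blast
qed

lemma mono_Lens_if_injective:
  assumes M: "is_lens A B M" and inj: "injective_functor A (lget M)"
  shows "mono_Lens A B M TYPE('x) TYPE('y)"
  unfolding mono_Lens_def
proof (intro allI impI, elim conjE)
  fix X :: "('x, 'y) cat" and F G
  assume X: "is_cat X" and F: "is_lens X A F" and G: "is_lens X A G"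
    and eq: "lens_eq X B (lens_comp M F) (lens_comp M G)"
  have get_eq: "ftor_eq X (lget F) (lget G)"
    using mono_Cat_if_injective[OF inj, unfolded mono_Cat_def] X
      is_lens_functor[OF F] is_lens_functor[OF G] ftor_eq_lens_comp[OF eq] by blast
  show "lens_eq X A F G"
    unfolding lens_eq_def
  proof (intro conjI get_eq ballI impI)
    fix x f assume x: "x \<in> Obj X" and f: "f \<in> Arr A" "Dom A f = fobj (lget F) x"
    have Fx: "fobj (lget F) x \<in> Obj A"
      using is_lens_functor[OF F] x unfolding is_functor_def by blast
    have "farr (lget M) f \<in> Arr B" "Dom B (farr (lget M) f) = fobj (lget M) (fobj (lget F) x)"
      using is_lens_functor[OF M] f unfolding is_functor_def by auto
    then have "lput F x (lput M (fobj (lget F) x) (farr (lget M) f)) =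
               lput G x (lput M (fobj (lget G) x) (farr (lget M) f))"
      using eq x unfolding lens_eq_def by (simp add: lens_comp_def ftor_comp_def)
    moreover have "fobj (lget G) x = fobj (lget F) x"
      using get_eq x unfolding ftor_eq_def by simp
    ultimately show "lput F x f = lput G x f"
      using lput_farr_if_injective[OF M inj Fx f] by simp
  qed
qed

definition cat_transfer :: "('o \<Rightarrow> 'x) \<Rightarrow> ('a \<Rightarrow> 'y) \<Rightarrow> ('o, 'a) cat \<Rightarrow> ('x, 'y) cat" where
  "cat_transfer i j C =
     \<lparr>Obj = i ` Obj C, Arr = j ` Arr C, Dom = i \<circ> Dom C \<circ> inv j, Cod = i \<circ> Cod C \<circ> inv j,
      Id = j \<circ> Id C \<circ> inv i, Comp = \<lambda>g f. j (Comp C (inv j g) (inv j f))\<rparr>"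

definition ftor_transfer ::
    "('o \<Rightarrow> 'x) \<Rightarrow> ('a \<Rightarrow> 'y) \<Rightarrow> ('o, 'a, 'p, 'b) ftor \<Rightarrow> ('x, 'y, 'p, 'b) ftor" where
  "ftor_transfer i j F = \<lparr>fobj = fobj F \<circ> inv i, farr = farr F \<circ> inv j\<rparr>"

definition lens_transfer ::
    "('o \<Rightarrow> 'x) \<Rightarrow> ('a \<Rightarrow> 'y) \<Rightarrow> ('o, 'a, 'p, 'b) lens \<Rightarrow> ('x, 'y, 'p, 'b) lens" where
  "lens_transfer i j L =
     \<lparr>lget = ftor_transfer i j (lget L), lput = \<lambda>w b. j (lput L (inv i w) b)\<rparr>"

lemma lget_lens_transfer [simp]: "lget (lens_transfer i j L) = ftor_transfer i j (lget L)"
  unfolding lens_transfer_def by simp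

lemma is_cat_transfer:
  assumes "inj i" "inj j" "is_cat C"
  shows "is_cat (cat_transfer i j C)"
  using assms(3) unfolding is_cat_def cat_transfer_def
  by (auto simp: inv_f_f[OF assms(1)] inv_f_f[OF assms(2)] inj_eq[OF assms(1)] inj_eq[OF assms(2)])

lemma is_lens_transfer:
  assumes "inj i" "inj j" "is_lens C A L"
  shows "is_lens (cat_transfer i j C) A (lens_transfer i j L)"
  using assms(3)
  unfolding is_lens_def is_functor_def cat_transfer_def lens_transfer_def ftor_transfer_def
  by (auto simp: inv_f_f[OF assms(1)] inv_f_f[OF assms(2)] inj_eq[OF assms(1)] inj_eq[OF assms(2)])

lemma lens_comp_transfer: "lens_comp M (lens_transfer i j L) = lens_transfer i j (lens_comp M L)"
  unfolding lens_comp_def lens_transfer_def ftor_transfer_def ftor_comp_def by auto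

lemma lens_eq_transfer:
  assumes "inj i" "inj j" "lens_eq C B L L'"
  shows "lens_eq (cat_transfer i j C) B (lens_transfer i j L) (lens_transfer i j L')"
  using assms(3)
  unfolding lens_eq_def ftor_eq_def cat_transfer_def lens_transfer_def ftor_transfer_def
  by (auto simp: inv_f_f[OF assms(1)] inv_f_f[OF assms(2)])

lemma ftor_eq_transfer_iff:
  assumes "inj i" "inj j"
  shows "ftor_eq (cat_transfer i j C) (ftor_transfer i j F) (ftor_transfer i j G) \<longleftrightarrow>
           ftor_eq C F G"
  unfolding ftor_eq_def cat_transfer_def ftor_transfer_def
  by (auto simp: inv_f_f[OF assms(1)] inv_f_f[OF assms(2)])

definition kernel_pair :: "('o, 'a) cat \<Rightarrow> ('o, 'a, 'p, 'b) ftor \<Rightarrow> ('o \<times> 'o, 'a \<times> 'a) cat" where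
  "kernel_pair A F =
     \<lparr>Obj = {(x, y). x \<in> Obj A \<and> y \<in> Obj A \<and> fobj F x = fobj F y},
      Arr = {(f, g). f \<in> Arr A \<and> g \<in> Arr A \<and> farr F f = farr F g},
      Dom = \<lambda>(f, g). (Dom A f, Dom A g), Cod = \<lambda>(f, g). (Cod A f, Cod A g),
      Id = \<lambda>(x, y). (Id A x, Id A y), Comp = \<lambda>(f', g') (f, g). (Comp A f' f, Comp A g' g)\<rparr>"

definition kernel_fst :: "('o, 'a, 'p, 'b) lens \<Rightarrow> ('o \<times> 'o, 'a \<times> 'a, 'o, 'a) lens" where
  "kernel_fst M = \<lparr>lget = \<lparr>fobj = fst, farr = fst\<rparr>,
                   lput = \<lambda>(x, y) f. (f, lput M y (farr (lget M) f))\<rparr>"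

definition kernel_snd :: "('o, 'a, 'p, 'b) lens \<Rightarrow> ('o \<times> 'o, 'a \<times> 'a, 'o, 'a) lens" where
  "kernel_snd M = \<lparr>lget = \<lparr>fobj = snd, farr = snd\<rparr>,
                   lput = \<lambda>(x, y) g. (lput M x (farr (lget M) g), g)\<rparr>"

lemma is_cat_kernel_pair:
  assumes "is_cat A" "is_functor A B F"
  shows "is_cat (kernel_pair A F)"
  using assms unfolding is_cat_def is_functor_def kernel_pair_def
  by (auto; metis)

lemma is_lens_kernel_fst:
  assumes "is_cat A" "is_lens A B M"
  shows "is_lens (kernel_pair A (lget M)) A (kernel_fst M)"
  using assms unfolding is_lens_def is_functor_def kernel_pair_def kernel_fst_def is_cat_def
  by auto

lemma is_lens_kernel_snd:
  assumes "is_cat A" "is_lens A B M"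
  shows "is_lens (kernel_pair A (lget M)) A (kernel_snd M)"
  using assms unfolding is_lens_def is_functor_def kernel_pair_def kernel_snd_def is_cat_def
  by auto

lemma lens_eq_kernel_pair:
  assumes "is_lens A B M"
  shows "lens_eq (kernel_pair A (lget M)) B
           (lens_comp M (kernel_fst M)) (lens_comp M (kernel_snd M))"
  using assms unfolding is_lens_def is_functor_def kernel_pair_def kernel_fst_def kernel_snd_def
    lens_eq_def lens_comp_def ftor_comp_def ftor_eq_def
  by auto

lemma ftor_eq_kernel_pair_iff:
  "ftor_eq (kernel_pair A F) \<lparr>fobj = fst, farr = fst\<rparr> \<lparr>fobj = snd, farr = snd\<rparr> \<longleftrightarrow>
     injective_functor A F"
  unfolding ftor_eq_def kernel_pair_def injective_functor_def inj_on_def by auto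

lemma kernel_pair_test:
  fixes i :: "'o \<times> 'o \<Rightarrow> 'x" and j :: "'a \<times> 'a \<Rightarrow> 'y"
    and A :: "('o, 'a) cat" and M :: "('o, 'a, 'p, 'b) lens"
  assumes "is_cat A" "is_lens A B M" "inj i" "inj j"
  obtains K :: "('x, 'y) cat" and Q1 Q2
  where "is_cat K" "is_lens K A Q1" "is_lens K A Q2"
    and "lens_eq K B (lens_comp M Q1) (lens_comp M Q2)"
    and "ftor_eq K (lget Q1) (lget Q2) \<longleftrightarrow> injective_functor A (lget M)"
proof
  let ?K = "kernel_pair A (lget M)"
  show "is_cat (cat_transfer i j ?K)"
    using is_cat_transfer[OF assms(3,4) is_cat_kernel_pair] assms(1,2) is_lens_functor by blast
  show "is_lens (cat_transfer i j ?K) A (lens_transfer i j (kernel_fst M))"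
    "is_lens (cat_transfer i j ?K) A (lens_transfer i j (kernel_snd M))"
    using is_lens_transfer[OF assms(3,4)] is_lens_kernel_fst is_lens_kernel_snd assms(1,2) by blast+
  show "lens_eq (cat_transfer i j ?K) B (lens_comp M (lens_transfer i j (kernel_fst M)))
      (lens_comp M (lens_transfer i j (kernel_snd M)))"
    unfolding lens_comp_transfer
    using lens_eq_transfer[OF assms(3,4) lens_eq_kernel_pair[OF assms(2)]] .
  show "ftor_eq (cat_transfer i j ?K) (lget (lens_transfer i j (kernel_fst M)))
      (lget (lens_transfer i j (kernel_snd M))) \<longleftrightarrow> injective_functor A (lget M)"
    by (simp add: kernel_fst_def kernel_snd_def ftor_eq_transfer_iff[OF assms(3,4)]
        ftor_eq_kernel_pair_iff)
qed

lemma injective_if_mono_Lens: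
  fixes A :: "('o, 'a) cat" and M :: "('o, 'a, 'p, 'b) lens"
  assumes "is_cat A" "is_lens A B M"
    and "\<exists>i :: 'o \<times> 'o \<Rightarrow> 'x. inj i" "\<exists>j :: 'a \<times> 'a \<Rightarrow> 'y. inj j"
    and "mono_Lens A B M TYPE('x) TYPE('y)"
  shows "injective_functor A (lget M)"
proof -
  obtain i :: "'o \<times> 'o \<Rightarrow> 'x" and j :: "'a \<times> 'a \<Rightarrow> 'y" where ij: "inj i" "inj j"
    using assms(3,4) by blast
  obtain K :: "('x, 'y) cat" and Q1 Q2 where "is_cat K" "is_lens K A Q1" "is_lens K A Q2"
    "lens_eq K B (lens_comp M Q1) (lens_comp M Q2)"
    "ftor_eq K (lget Q1) (lget Q2) \<longleftrightarrow> injective_functor A (lget M)"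
    using kernel_pair_test[OF assms(1,2) ij] .
  with assms(5) show ?thesis
    unfolding mono_Lens_def lens_eq_def by blast
qed

lemma injective_if_mono_Cat:
  fixes A :: "('o, 'a) cat" and M :: "('o, 'a, 'p, 'b) lens"
  assumes "is_cat A" "is_lens A B M"
    and "\<exists>i :: 'o \<times> 'o \<Rightarrow> 'x. inj i" "\<exists>j :: 'a \<times> 'a \<Rightarrow> 'y. inj j"
    and "mono_Cat A B (lget M) TYPE('x) TYPE('y)"
  shows "injective_functor A (lget M)"
proof -
  obtain i :: "'o \<times> 'o \<Rightarrow> 'x" and j :: "'a \<times> 'a \<Rightarrow> 'y" where ij: "inj i" "inj j"
    using assms(3,4) by blast
  obtain K :: "('x, 'y) cat" and Q1 Q2 where "is_cat K" "is_lens K A Q1" "is_lens K A Q2"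
    "lens_eq K B (lens_comp M Q1) (lens_comp M Q2)"
    "ftor_eq K (lget Q1) (lget Q2) \<longleftrightarrow> injective_functor A (lget M)"
    using kernel_pair_test[OF assms(1,2) ij] .
  with assms(5) show ?thesis
    unfolding mono_Cat_def using is_lens_functor ftor_eq_lens_comp by blast
qed

theorem theorem3p1:
  fixes A :: "('o, 'a) cat" and B :: "('p, 'b) cat" and M :: "('o, 'a, 'p, 'b) lens"
  assumes "is_cat A" and "is_cat B" and "is_lens A B M"
    and "\<exists>i :: 'o \<times> 'o \<Rightarrow> 'x. inj i" and "\<exists>j :: 'a \<times> 'a \<Rightarrow> 'y. inj j"
  shows "mono_Lens A B M TYPE('x) TYPE('y) \<longleftrightarrow> mono_Cat A B (lget M) TYPE('x) TYPE('y)"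
proof
  assume "mono_Lens A B M TYPE('x) TYPE('y)"
  then have "injective_functor A (lget M)"
    using injective_if_mono_Lens assms(1,3-5) by blast
  then show "mono_Cat A B (lget M) TYPE('x) TYPE('y)"
    by (rule mono_Cat_if_injective)
next
  assume "mono_Cat A B (lget M) TYPE('x) TYPE('y)"
  then have "injective_functor A (lget M)"
    using injective_if_mono_Cat assms(1,3-5) by blast
  then show "mono_Lens A B M TYPE('x) TYPE('y)"
    using mono_Lens_if_injective assms(3) by blast
qed

end
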